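(* Let $d$ be such that $3d/4$ and $12d\mathcal{D}$ are integers, where $\mathcal{D}=\frac{\ln n}{\sqrt d}$. Let $a$ be a uniformly random regular point and $b$ a special point in $\{-\frac1{\sqrt d},\frac1{\sqrt d}\}^d$. For $d\ge8\ln^2n$, $\Pr[a^\top b>\frac14-6\mathcal{D}]\le\frac1{n^3}$ and $\Pr[a^\top b<\frac14-18\mathcal{D}]\le\frac1{n^3}$.
   Context: A point of $\{-\frac1{\sqrt d},\frac1{\sqrt d}\}^d$ is regular if it has exactly $\frac{3d}4$ coordinates equal to $\frac1{\sqrt d}$ and $\frac d4$ equal to $-\frac1{\sqrt d}$; it is special if it has exactly $\frac{3d}4-12d\mathcal{D}$ coordinates equal to $\frac1{\sqrt d}$ and $\frac d4+12d\mathcal{D}$ equal to $-\frac1{\sqrt d}$. *)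

theory Defs
  imports "HOL-Probability.Probability"
begin

definition cube :: "nat \<Rightarrow> (nat \<Rightarrow> real) set" where
  "cube d = ({..<d} \<rightarrow>\<^sub>E {- 1 / sqrt (real d), 1 / sqrt (real d)})"

definition num_pos :: "nat \<Rightarrow> (nat \<Rightarrow> real) \<Rightarrow> nat" where
  "num_pos d x = card {i \<in> {..<d}. x i = 1 / sqrt (real d)}"

definition calD :: "nat \<Rightarrow> nat \<Rightarrow> real" where
  "calD n d = ln (real n) / sqrt (real d)"

definition regular_points :: "nat \<Rightarrow> (nat \<Rightarrow> real) set" where
  "regular_points d = {x \<in> cube d. real (num_pos d x) = 3 * real d / 4}"

definition special_points :: "nat \<Rightarrow> nat \<Rightarrow> (nat \<Rightarrow> real) set" where
  "special_points n d = {x \<in> cube d.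
      real (num_pos d x) = 3 * real d / 4 - 12 * real d * calD n d}"

definition inner_d :: "nat \<Rightarrow> (nat \<Rightarrow> real) \<Rightarrow> (nat \<Rightarrow> real) \<Rightarrow> real" where
  "inner_d d a b = (\<Sum>i<d. a i * b i)"

end

theory Submission
  imports Defs
begin

text \<open>A regular point a is determined by the set A of its positive coordinates, a uniformly
random subset of size 3d/4 of the d coordinates. If P is the set of positive coordinates of the
special point b, then the inner product is 1/4 - 12 D + 4 (|P \<inter> A| - 3|P|/4) / d, so both
events say that the hypergeometric variable |P \<inter> A| deviates from its mean by more than
t = 3 sqrt d ln n / 2. Since Pr[S \<subseteq> A] \<le> (3/4)^|S| for every S, the moment generating
function of |P \<inter> A| is dominated by that of a binomial variable, and Chernoff's method with
Hoeffding's lemma bounds each tail by exp (-2 t^2 / (3d/4)) = exp (-6 (ln n)^2) \<le> n^-3.\<close>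

definition k_subsets :: "'a set \<Rightarrow> nat \<Rightarrow> 'a set set" where
  "k_subsets U k = {A. A \<subseteq> U \<and> card A = k}"

lemma finite_k_subsets: "finite U \<Longrightarrow> finite (k_subsets U k)"
  unfolding k_subsets_def by simp

lemma card_k_subsets: "finite U \<Longrightarrow> card (k_subsets U k) = card U choose k"
  unfolding k_subsets_def by (rule n_subsets)

lemma k_subsets_nonempty: "finite U \<Longrightarrow> k \<le> card U \<Longrightarrow> k_subsets U k \<noteq> {}"
  using card_k_subsets[of U k] by fastforce

lemma measure_pmf_of_set_bij_betw:
  assumes "bij_betw f R F" "finite R" "R \<noteq> {}"
    and "\<And>a. a \<in> R \<Longrightarrow> a \<in> E \<longleftrightarrow> f a \<in> E'"
  shows "measure_pmf.prob (pmf_of_set R) E = measure_pmf.prob (pmf_of_set F) E'"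
proof -
  have "R \<inter> E = R \<inter> f -` E'" using assms(4) by auto
  then have "measure_pmf.prob (pmf_of_set R) E = measure_pmf.prob (pmf_of_set R) (f -` E')"
    using assms(2,3) by (simp add: measure_pmf_of_set)
  also have "\<dots> = measure_pmf.prob (map_pmf f (pmf_of_set R)) E'" by simp
  also have "map_pmf f (pmf_of_set R) = pmf_of_set F"
    using assms(1,3,2) by (rule map_pmf_of_set_bij_betw)
  finally show ?thesis .
qed

section \<open>Hypergeometric tails\<close>

lemma sum_pow_card_Pow:
  fixes x :: "'b :: comm_semiring_1"
  assumes "finite X"
  shows "(\<Sum>S\<in>Pow X. x ^ card S) = (1 + x) ^ card X"
  using prod_add[OF assms, of "\<lambda>_. x" "\<lambda>_. 1"] by (simp add: add.commute)

lemma binomial_diff_le_binomial_mult_power: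
  assumes "s \<le> m" "m \<le> N"
  shows "real ((N - s) choose (m - s)) \<le> real (N choose m) * (real m / real N) ^ s"
  using assms
proof (induction s arbitrary: N m)
  case 0
  then show ?case by simp
next
  case (Suc s)
  then obtain m' N' where mN: "m = Suc m'" "N = Suc N'" by (metis Suc_le_D le_trans)
  have le: "s \<le> m'" "m' \<le> N'" using Suc.prems mN by auto
  have step: "real (N' choose m') = real (N choose m) * (real m / real N)"
  proof -
    have "real (Suc N' * (N' choose m')) = real ((Suc N' choose Suc m') * Suc m')"
      using Suc_times_binomial_eq by presburger
    then show ?thesis using mN by (simp add: field_simps)
  qed
  have ratio_mono: "real m' / real N' \<le> real m / real N"
    using le mN by (cases "N' = 0") (simp_all add: field_simps)
  have "real ((N - Suc s) choose (m - Suc s)) = real ((N' - s) choose (m' - s))"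
    using mN by simp
  also have "\<dots> \<le> real (N' choose m') * (real m' / real N') ^ s"
    using Suc.IH[OF le] .
  also have "\<dots> \<le> real (N' choose m') * (real m / real N) ^ s"
    by (intro mult_left_mono power_mono ratio_mono) auto
  also have "\<dots> = real (N choose m) * (real m / real N) ^ Suc s"
    using step by simp
  finally show ?case .
qed

lemma card_k_subsets_supersets_le:
  assumes "finite U" "S \<subseteq> U" "m \<le> card U"
  shows "real (card {A \<in> k_subsets U m. S \<subseteq> A})
     \<le> real (card (k_subsets U m)) * (real m / real (card U)) ^ card S"
proof (cases "card S \<le> m")
  case False
  have "{A \<in> k_subsets U m. S \<subseteq> A} = {}"
    using False assms unfolding k_subsets_def by (auto dest: card_mono[OF finite_subset])
  then show ?thesis by (simp only: card.empty of_nat_0) simp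
next
  case True
  have fin_S: "finite S" using assms finite_subset by blast
  have "bij_betw (\<lambda>B. B \<union> S) (k_subsets (U - S) (m - card S)) {A \<in> k_subsets U m. S \<subseteq> A}"
  proof (rule bij_betw_byWitness[where f' = "\<lambda>A. A - S"])
    show "(\<lambda>B. B \<union> S) ` k_subsets (U - S) (m - card S) \<subseteq> {A \<in> k_subsets U m. S \<subseteq> A}"
    proof
      fix A assume "A \<in> (\<lambda>B. B \<union> S) ` k_subsets (U - S) (m - card S)"
      then obtain B where B: "B \<subseteq> U - S" "card B = m - card S" "A = B \<union> S"
        by (auto simp: k_subsets_def)
      have "finite B" using B(1) assms(1) finite_subset by blast
      then show "A \<in> {A \<in> k_subsets U m. S \<subseteq> A}"
        using card_Un_disjoint[OF \<open>finite B\<close> fin_S] B True assms(2) by (auto simp: k_subsets_def)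
    qed
    show "(\<lambda>A. A - S) ` {A \<in> k_subsets U m. S \<subseteq> A} \<subseteq> k_subsets (U - S) (m - card S)"
      using fin_S by (auto simp: k_subsets_def card_Diff_subset)
  qed (auto simp: k_subsets_def)
  then have "card {A \<in> k_subsets U m. S \<subseteq> A} = (card U - card S) choose (m - card S)"
    using assms card_Diff_subset[OF fin_S assms(2)]
    by (simp add: bij_betw_same_card[symmetric] card_k_subsets)
  then show ?thesis
    using binomial_diff_le_binomial_mult_power[OF True assms(3)] assms(1)
    by (simp add: card_k_subsets)
qed

text \<open>Expanding (1 + x)^|P \<inter> A| over the subsets S of P \<inter> A and swapping the sums, each S
contributes x^|S| times the probability that A \<supseteq> S, which is at most q^|S|.\<close>

lemma sum_k_subsets_pow_card_Int_le:
  fixes x :: real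
  assumes "finite U" "P \<subseteq> U" "m \<le> card U" "x \<ge> 0"
  defines "q \<equiv> real m / real (card U)"
  shows "(\<Sum>A\<in>k_subsets U m. (1 + x) ^ card (P \<inter> A))
     \<le> real (card (k_subsets U m)) * (1 + x * q) ^ card P"
proof -
  define F where "F = k_subsets U m"
  have fin_F: "finite F" unfolding F_def using assms(1) by (rule finite_k_subsets)
  have fin_P: "finite P" using assms finite_subset by blast
  have "(\<Sum>A\<in>F. (1 + x) ^ card (P \<inter> A)) = (\<Sum>A\<in>F. \<Sum>S\<in>{S \<in> Pow P. S \<subseteq> A}. x ^ card S)"
    using fin_P by (intro sum.cong) (auto simp flip: sum_pow_card_Pow intro: sum.cong)
  also have "\<dots> = (\<Sum>S\<in>Pow P. x ^ card S * real (card {A \<in> F. S \<subseteq> A}))"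
    using fin_F fin_P by (subst sum.swap_restrict) (auto simp: mult.commute)
  also have "\<dots> \<le> (\<Sum>S\<in>Pow P. x ^ card S * (real (card F) * q ^ card S))"
    using assms card_k_subsets_supersets_le[OF assms(1) _ assms(3)]
    unfolding F_def q_def by (intro sum_mono mult_left_mono) auto
  also have "\<dots> = real (card F) * (\<Sum>S\<in>Pow P. (x * q) ^ card S)"
    by (simp add: sum_distrib_left power_mult_distrib algebra_simps)
  also have "\<dots> = real (card F) * (1 + x * q) ^ card P"
    using fin_P by (simp add: sum_pow_card_Pow)
  finally show ?thesis unfolding F_def .
qed

lemma card_k_subsets_upper_tail_le:
  fixes l t :: real
  assumes "finite U" "P \<subseteq> U" "m \<le> card U" "l \<ge> 0"
  defines "q \<equiv> real m / real (card U)"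
  shows "real (card {A \<in> k_subsets U m. real (card (P \<inter> A)) > q * real (card P) + t})
     \<le> real (card (k_subsets U m)) * exp (- l * t + real (card P) * l\<^sup>2 / 8)"
proof -
  define F where "F = k_subsets U m"
  define y where "y = q * real (card P) + t"
  have fin_F: "finite F" unfolding F_def using assms(1) by (rule finite_k_subsets)
  have "real (card {A \<in> F. real (card (P \<inter> A)) > y}) = (\<Sum>A\<in>{A \<in> F. real (card (P \<inter> A)) > y}. 1)"
    by simp
  also have "\<dots> \<le> (\<Sum>A\<in>{A \<in> F. real (card (P \<inter> A)) > y}. exp (l * (real (card (P \<inter> A)) - y)))"
    using assms(4) by (intro sum_mono) simp
  also have "\<dots> \<le> (\<Sum>A\<in>F. exp (l * (real (card (P \<inter> A)) - y)))"
    using fin_F by (intro sum_mono2) auto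
  also have "\<dots> = exp (- l * y) * (\<Sum>A\<in>F. (1 + (exp l - 1)) ^ card (P \<inter> A))"
    by (simp add: sum_distrib_left exp_of_nat_mult[symmetric] exp_add[symmetric] algebra_simps)
  also have "\<dots> \<le> exp (- l * y) * (real (card F) * (1 + (exp l - 1) * q) ^ card P)"
    using sum_k_subsets_pow_card_Int_le[OF assms(1-3), of "exp l - 1"] assms(4)
    unfolding F_def q_def by (intro mult_left_mono) auto
  also have "\<dots> \<le> exp (- l * y) * (real (card F) * exp (l * q + l\<^sup>2 / 8) ^ card P)"
  proof -
    have pos: "1 + (exp l - 1) * q > 0"
      using assms(4) by (intro add_pos_nonneg) (auto simp: q_def)
    have "ln (1 + (exp l - 1) * q) \<le> l * q + l\<^sup>2 / 8"
      using Hoeffdings_lemma_aux[OF assms(4), of q] by (simp add: q_def mult.commute)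
    then have "1 + (exp l - 1) * q \<le> exp (l * q + l\<^sup>2 / 8)"
      using pos by (metis exp_le_cancel_iff exp_ln)
    then show ?thesis using pos by (intro mult_left_mono power_mono) auto
  qed
  also have "\<dots> = real (card F) * exp (- l * t + real (card P) * l\<^sup>2 / 8)"
    unfolding y_def by (simp add: exp_of_nat_mult[symmetric] exp_add[symmetric] algebra_simps)
  finally show ?thesis unfolding F_def y_def .
qed

lemma hypergeometric_upper_tail:
  fixes t K :: real
  assumes "finite U" "P \<subseteq> U" "m \<le> card U" "t \<ge> 0" "real (card P) \<le> K" "K > 0"
  defines "q \<equiv> real m / real (card U)"
  shows "measure_pmf.prob (pmf_of_set (k_subsets U m))
           {A. real (card (P \<inter> A)) > q * real (card P) + t} \<le> exp (- 2 * t\<^sup>2 / K)"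
proof -
  define F where "F = k_subsets U m"
  define l where "l = 4 * t / K"
  have F_pos: "card F > 0"
    using assms(1,3) unfolding F_def by (simp add: card_gt_0_iff finite_k_subsets k_subsets_nonempty)
  have "real (card (F \<inter> {A. real (card (P \<inter> A)) > q * real (card P) + t}))
      \<le> real (card F) * exp (- l * t + real (card P) * l\<^sup>2 / 8)"
    using card_k_subsets_upper_tail_le[OF assms(1-3), of l t] assms(4,6)
    unfolding F_def l_def q_def by (simp add: Int_def conj_commute)
  also have "\<dots> \<le> real (card F) * exp (- l * t + K * l\<^sup>2 / 8)"
    using assms(5) by (intro mult_left_mono) (auto intro: mult_right_mono)
  also have "- l * t + K * l\<^sup>2 / 8 = - 2 * t\<^sup>2 / K"
    unfolding l_def using assms(6) by (simp add: field_simps power2_eq_square)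
  finally show ?thesis
    using F_pos unfolding F_def by (simp add: measure_pmf_of_set k_subsets_nonempty
        finite_k_subsets assms(1,3) divide_le_eq mult.commute)
qed

text \<open>The lower tail is the upper tail of |P \<inter> (U - A)|, where U - A is a uniformly random
subset of size |U| - m.\<close>

lemma hypergeometric_lower_tail:
  fixes t K :: real
  assumes "finite U" "P \<subseteq> U" "m \<le> card U" "t \<ge> 0" "real (card P) \<le> K" "K > 0"
  defines "q \<equiv> real m / real (card U)"
  shows "measure_pmf.prob (pmf_of_set (k_subsets U m))
           {A. real (card (P \<inter> A)) < q * real (card P) - t} \<le> exp (- 2 * t\<^sup>2 / K)"
proof -
  define q' where "q' = real (card U - m) / real (card U)"
  have fin_P: "finite P" using assms(1,2) finite_subset by blast
  have bij: "bij_betw (\<lambda>A. U - A) (k_subsets U m) (k_subsets U (card U - m))"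
    by (rule bij_betw_byWitness[where f' = "\<lambda>A. U - A"])
      (use assms(1,3) in \<open>auto simp: k_subsets_def card_Diff_subset finite_subset\<close>)
  have "q' * real (card P) = real (card P) - q * real (card P)"
  proof (cases "card U = 0")
    case True
    then have "P = {}" using assms(1,2) by auto
    then show ?thesis by simp
  next
    case False
    then show ?thesis using assms(3) by (simp add: q'_def q_def of_nat_diff field_simps)
  qed
  moreover have "real (card (P \<inter> (U - A))) = real (card P) - real (card (P \<inter> A))" for A
  proof -
    have "P \<inter> (U - A) = P - P \<inter> A" using assms(2) by auto
    then show ?thesis using fin_P by (simp add: card_Diff_subset of_nat_diff card_mono)
  qed
  ultimately have "measure_pmf.prob (pmf_of_set (k_subsets U m))
           {A. real (card (P \<inter> A)) < q * real (card P) - t}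
      = measure_pmf.prob (pmf_of_set (k_subsets U (card U - m)))
           {B. real (card (P \<inter> B)) > q' * real (card P) + t}"
    using bij assms(1,3)
    by (intro measure_pmf_of_set_bij_betw) (auto simp: finite_k_subsets k_subsets_nonempty)
  also have "\<dots> \<le> exp (- 2 * t\<^sup>2 / K)"
    unfolding q'_def using assms by (intro hypergeometric_upper_tail) auto
  finally show ?thesis .
qed

section \<open>Points of the cube as sets of coordinates\<close>

definition pos_coords :: "nat \<Rightarrow> (nat \<Rightarrow> real) \<Rightarrow> nat set" where
  "pos_coords d a = {i \<in> {..<d}. a i = 1 / sqrt (real d)}"

lemma pos_coords_subset: "pos_coords d a \<subseteq> {..<d}"
  unfolding pos_coords_def by auto

lemma cube_coord:
  assumes "a \<in> cube d" "i < d"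
  shows "a i = (if i \<in> pos_coords d a then 1 else - 1) / sqrt (real d)"
  using assms unfolding cube_def pos_coords_def by (auto simp: PiE_iff)

lemma bij_betw_pos_coords_regular_points:
  assumes "d > 0" "real m = 3 * real d / 4"
  shows "bij_betw (pos_coords d) (regular_points d) (k_subsets {..<d} m)"
proof (rule bij_betw_imageI)
  show "inj_on (pos_coords d) (regular_points d)"
  proof (rule inj_onI)
    fix a a' assume a: "a \<in> regular_points d" "a' \<in> regular_points d"
      and eq: "pos_coords d a = pos_coords d a'"
    then have a_cube: "a \<in> cube d" and a'_cube: "a' \<in> cube d" unfolding regular_points_def by auto
    then show "a = a'"
      unfolding cube_def
    proof (rule PiE_ext)
      fix i assume "i \<in> {..<d}"
      then show "a i = a' i" using cube_coord[OF a_cube] cube_coord[OF a'_cube] eq by simp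
    qed
  qed
  show "pos_coords d ` regular_points d = k_subsets {..<d} m"
  proof
    show "pos_coords d ` regular_points d \<subseteq> k_subsets {..<d} m"
      using assms(2) pos_coords_subset
      by (auto simp: regular_points_def num_pos_def k_subsets_def pos_coords_def
               simp flip: of_nat_eq_iff)
    show "k_subsets {..<d} m \<subseteq> pos_coords d ` regular_points d"
    proof
      fix A assume A: "A \<in> k_subsets {..<d} m"
      define a where "a = (\<lambda>i\<in>{..<d}. if i \<in> A then 1 / sqrt (real d) else - 1 / sqrt (real d))"
      have "pos_coords d a = A" using A assms(1) unfolding a_def pos_coords_def k_subsets_def by auto
      moreover have "a \<in> regular_points d"
        using A assms(2) calculation
        unfolding regular_points_def num_pos_def cube_def a_def k_subsets_def
        by (auto simp: pos_coords_def)
      ultimately show "A \<in> pos_coords d ` regular_points d" by blast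
    qed
  qed
qed

lemma inner_d_cube:
  assumes "a \<in> cube d" "b \<in> cube d" "d > 0"
  shows "inner_d d a b = (4 * real (card (pos_coords d a \<inter> pos_coords d b))
           - 2 * real (card (pos_coords d a)) - 2 * real (card (pos_coords d b)) + real d) / real d"
proof -
  define A where "A = pos_coords d a"
  define B where "B = pos_coords d b"
  have "inner_d d a b = (\<Sum>i<d. (4 * of_bool (i \<in> A \<inter> B) - 2 * of_bool (i \<in> A)
                            - 2 * of_bool (i \<in> B) + 1) / real d)"
    unfolding inner_d_def
    by (intro sum.cong refl) (use assms in \<open>auto simp: cube_coord A_def B_def field_simps\<close>)
  also have "\<dots> = (4 * real (card (A \<inter> B)) - 2 * real (card A) - 2 * real (card B) + real d) / real d"
  proof -
    have "{..<d} \<inter> A = A" "{..<d} \<inter> B = B" "{..<d} \<inter> {i \<in> A. i \<in> B} = A \<inter> B"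
      using pos_coords_subset unfolding A_def B_def by blast+
    then show ?thesis
      by (simp add: sum_divide_distrib[symmetric] sum.distrib sum_subtractf sum_distrib_left[symmetric])
  qed
  finally show ?thesis unfolding A_def B_def .
qed

lemma measure_regular_points_eq_k_subsets:
  assumes "d > 0" "real m = 3 * real d / 4"
    and "\<And>a. a \<in> regular_points d \<Longrightarrow> a \<in> E \<longleftrightarrow> pos_coords d a \<in> E'"
  shows "measure_pmf.prob (pmf_of_set (regular_points d)) E
       = measure_pmf.prob (pmf_of_set (k_subsets {..<d} m)) E'"
proof -
  have bij: "bij_betw (pos_coords d) (regular_points d) (k_subsets {..<d} m)"
    using assms(1,2) by (rule bij_betw_pos_coords_regular_points)
  have "m \<le> card {..<d}" using assms(2) by (simp flip: of_nat_le_iff)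
  then have "regular_points d \<noteq> {}"
    using bij k_subsets_nonempty[of "{..<d}" m] by (auto simp: bij_betw_def)
  moreover have "finite (regular_points d)"
    using bij by (simp add: bij_betw_finite finite_k_subsets)
  ultimately show ?thesis using bij assms(3) by (intro measure_pmf_of_set_bij_betw) auto
qed

lemma card_pos_coords_special:
  assumes "b \<in> special_points n d" "d > 0"
  shows "real (card (pos_coords d b)) = 3 * real d / 4 - 12 * sqrt (real d) * ln (real n)"
proof -
  have "12 * real d * calD n d = 12 * sqrt (real d) * ln (real n)"
    using assms(2) real_sqrt_mult_self[of "real d"] unfolding calD_def by (simp add: field_simps)
  then show ?thesis
    using assms(1) unfolding special_points_def num_pos_def pos_coords_def by simp
qed

lemma inner_d_regular_special:
  assumes "a \<in> regular_points d" "b \<in> special_points n d" "d > 0"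
  defines "P \<equiv> pos_coords d b"
  shows "inner_d d a b = 1/4 - 12 * calD n d
           + 4 / real d * (real (card (P \<inter> pos_coords d a)) - 3/4 * real (card P))"
proof -
  have a_cube: "a \<in> cube d" and card_a: "real (card (pos_coords d a)) = 3 * real d / 4"
    using assms(1) unfolding regular_points_def num_pos_def pos_coords_def by auto
  have b_cube: "b \<in> cube d" using assms(2) unfolding special_points_def by simp
  have "inner_d d a b = 4 / real d * (real (card (P \<inter> pos_coords d a)) - 3/4 * real (card P))
               + (real (card P) - real d / 2) / real d"
    unfolding inner_d_cube[OF a_cube b_cube assms(3)] card_a P_def using assms(3)
    by (simp add: Int_commute field_simps)
  also have "(real (card P) - real d / 2) / real d = 1/4 - 12 * calD n d"
    unfolding P_def card_pos_coords_special[OF assms(2,3)] calD_def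
    using assms(3) real_sqrt_mult_self[of "real d"] by (simp add: field_simps)
  finally show ?thesis by simp
qed

lemma six_calD_eq: "d > 0 \<Longrightarrow> 6 * calD n d = 4 / real d * (3/2 * sqrt (real d) * ln (real n))"
  using real_sqrt_mult_self[of "real d"] unfolding calD_def by (simp add: field_simps)

lemma inner_d_regular_special_greater_iff:
  assumes "a \<in> regular_points d" "b \<in> special_points n d" "d > 0"
  defines "P \<equiv> pos_coords d b"
  shows "inner_d d a b > 1/4 - 6 * calD n d
     \<longleftrightarrow> real (card (P \<inter> pos_coords d a)) > 3/4 * real (card P) + 3/2 * sqrt (real d) * ln (real n)"
proof -
  have "0 < 4 / real d" using assms(3) by simp
  from mult_less_cancel_left_pos[OF this, of "3/2 * sqrt (real d) * ln (real n)"
      "real (card (P \<inter> pos_coords d a)) - 3/4 * real (card P)"]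
  show ?thesis
    using inner_d_regular_special[OF assms(1-3)] six_calD_eq[of d n, OF assms(3)]
    unfolding P_def by (simp only: right_diff_distrib) linarith
qed

lemma inner_d_regular_special_less_iff:
  assumes "a \<in> regular_points d" "b \<in> special_points n d" "d > 0"
  defines "P \<equiv> pos_coords d b"
  shows "inner_d d a b < 1/4 - 18 * calD n d
     \<longleftrightarrow> real (card (P \<inter> pos_coords d a)) < 3/4 * real (card P) - 3/2 * sqrt (real d) * ln (real n)"
proof -
  have "0 < 4 / real d" using assms(3) by simp
  from mult_less_cancel_left_pos[OF this, of "3/2 * sqrt (real d) * ln (real n)"
      "3/4 * real (card P) - real (card (P \<inter> pos_coords d a))"]
  show ?thesis
    using inner_d_regular_special[OF assms(1-3)] six_calD_eq[of d n, OF assms(3)]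
    unfolding P_def by (simp only: right_diff_distrib) linarith
qed

lemma exp_neg_six_ln_squared_le:
  assumes "n \<ge> 1"
  shows "exp (- 6 * (ln (real n))\<^sup>2) \<le> 1 / real n ^ 3"
proof -
  define L where "L = ln (real n)"
  have "3 * L \<le> 6 * L\<^sup>2"
  proof (cases "n = 1")
    case False
    then have "ln 2 \<le> L" using assms unfolding L_def by simp
    then have "1/2 \<le> L" using ln2_ge_two_thirds by linarith
    then show ?thesis by (simp add: power2_eq_square mult_right_mono)
  qed (simp add: L_def)
  then have "exp (- 6 * L\<^sup>2) \<le> exp (- (real 3 * L))" by simp
  also have "\<dots> = 1 / real n ^ 3"
    using assms unfolding L_def exp_minus exp_of_nat_mult by (simp add: divide_inverse)
  finally show ?thesis unfolding L_def .
qed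

theorem mainTheorem20:
  fixes n d :: nat and b :: "nat \<Rightarrow> real"
  assumes "n \<ge> 1" and "d > 0"
    and "3 * real d / 4 \<in> \<int>"
    and "12 * real d * calD n d \<in> \<int>"
    and "real d \<ge> 8 * (ln (real n))\<^sup>2"
    and "b \<in> special_points n d"
  shows "measure_pmf.prob (pmf_of_set (regular_points d))
           {a. inner_d d a b > 1/4 - 6 * calD n d} \<le> 1 / real n ^ 3
         \<and> measure_pmf.prob (pmf_of_set (regular_points d))
           {a. inner_d d a b < 1/4 - 18 * calD n d} \<le> 1 / real n ^ 3"
proof -
  define P where "P = pos_coords d b"
  define t where "t = 3/2 * sqrt (real d) * ln (real n)"
  obtain m :: nat where m: "real m = 3 * real d / 4"
  proof -
    obtain k :: int where "3 * real d / 4 = of_int k" using assms(3) Ints_cases by metis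
    then show ?thesis using that[of "nat k"] by simp
  qed
  then have m_le: "m \<le> card {..<d}" and q: "real m / real (card {..<d}) = 3/4"
    using assms(2) by (simp_all flip: of_nat_le_iff)
  have P_sub: "P \<subseteq> {..<d}" unfolding P_def by (rule pos_coords_subset)
  have t_nonneg: "t \<ge> 0" and K_pos: "3 * real d / 4 > 0"
    using assms(1,2) unfolding t_def by auto
  have P_le: "real (card P) \<le> 3 * real d / 4"
    using card_pos_coords_special[OF assms(6,2)] t_nonneg unfolding P_def t_def by simp
  have tail: "exp (- 2 * t\<^sup>2 / (3 * real d / 4)) \<le> 1 / real n ^ 3"
    using exp_neg_six_ln_squared_le[OF assms(1)] assms(2)
    unfolding t_def by (simp add: power_mult_distrib field_simps)
  have "measure_pmf.prob (pmf_of_set (regular_points d)) {a. inner_d d a b > 1/4 - 6 * calD n d}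
      = measure_pmf.prob (pmf_of_set (k_subsets {..<d} m))
          {A. real (card (P \<inter> A)) > 3/4 * real (card P) + t}"
    by (rule measure_regular_points_eq_k_subsets[OF assms(2) m])
      (simp add: inner_d_regular_special_greater_iff[OF _ assms(6,2)] P_def t_def)
  also have "\<dots> \<le> 1 / real n ^ 3"
    using hypergeometric_upper_tail[OF _ P_sub m_le t_nonneg P_le K_pos] tail unfolding q by simp
  moreover have "measure_pmf.prob (pmf_of_set (regular_points d)) {a. inner_d d a b < 1/4 - 18 * calD n d}
      = measure_pmf.prob (pmf_of_set (k_subsets {..<d} m))
          {A. real (card (P \<inter> A)) < 3/4 * real (card P) - t}"
    by (rule measure_regular_points_eq_k_subsets[OF assms(2) m])
      (simp add: inner_d_regular_special_less_iff[OF _ assms(6,2)] P_def t_def)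
  moreover have "\<dots> \<le> 1 / real n ^ 3"
    using hypergeometric_lower_tail[OF _ P_sub m_le t_nonneg P_le K_pos] tail unfolding q by simp
  ultimately show ?thesis by simp
qed

end
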